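(* Every separable, incomplete real normed space $X$ contains a bounded overcomplete sequence that is not relatively (norm) compact in $X$.
   Context: A sequence $(g_k)_{k<\omega}$ in a normed space $X$ is overcomplete if every subsequence of it is linearly dense in $X$, i.e. the closed linear span of every subsequence is $X$. *)

theory Defs
  imports "HOL-Analysis.Analysis"
begin

definition linearly_dense :: "'a::real_normed_vector set \<Rightarrow> bool" where
  "linearly_dense S \<longleftrightarrow> closure (span S) = UNIV"

definition overcomplete :: "(nat \<Rightarrow> 'a::real_normed_vector) \<Rightarrow> bool" where
  "overcomplete g \<longleftrightarrow> (\<forall>r::nat \<Rightarrow> nat. strict_mono r \<longrightarrow> linearly_dense (range (g \<circ> r)))"

end

(*
  Take a non-convergent Cauchy sequence c, thinned out so that |c n - c m| <= t n ^ (n + 2)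
  for n <= m, where t n = 2 ^ -(n + 1), and a sequence a in the unit ball with dense span, and put
    g n = c n + (SUM i < n. t n ^ (i + 1) * a i).
  The perturbation tends to 0, so g is Cauchy (hence bounded) but does not converge, hence its
  closure is not compact.  For an infinite index set N, induction on k puts a k into the closed
  span V of g restricted to N: if a 0, ..., a (k - 1) are in V, then for n < m in N the vector
    (g n - g m - (SUM i < k. (t n ^ (i + 1) - t m ^ (i + 1)) * a i)) / t n ^ (k + 1)
  lies in V and is within 3 t n + 2 (t m / t n) ^ (k + 1) of a k; the exponent n + 2 is what makes
  the contribution of c n - c m small.  Choosing n large and then m much larger gives a k in V.
*)
theory Submission
  imports Defs
begin

lemma subspace_closure:
  fixes S :: "'a::real_normed_vector set"
  assumes "subspace S"
  shows "subspace (closure S)"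
  unfolding subspace_def
proof (intro conjI ballI allI)
  show "0 \<in> closure S"
    using assms closure_subset subspace_0 by blast
next
  fix x y assume "x \<in> closure S" "y \<in> closure S"
  then obtain f h where f: "\<forall>n. f n \<in> S" "f \<longlonglongrightarrow> x" and h: "\<forall>n. h n \<in> S" "h \<longlonglongrightarrow> y"
    unfolding closure_sequential by blast
  have "\<forall>n. f n + h n \<in> S"
    using assms f(1) h(1) by (simp add: subspace_add)
  moreover have "(\<lambda>n. f n + h n) \<longlonglongrightarrow> x + y"
    using f(2) h(2) by (rule tendsto_add)
  ultimately show "x + y \<in> closure S"
    unfolding closure_sequential by (intro exI[of _ "\<lambda>n. f n + h n"]) simp
next
  fix r :: real and x assume "x \<in> closure S"
  then obtain f where f: "\<forall>n. f n \<in> S" "f \<longlonglongrightarrow> x"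
    unfolding closure_sequential by blast
  have "\<forall>n. r *\<^sub>R f n \<in> S"
    using assms f(1) by (simp add: subspace_scale)
  moreover have "(\<lambda>n. r *\<^sub>R f n) \<longlonglongrightarrow> r *\<^sub>R x"
    using f(2) by (intro tendsto_scaleR tendsto_const)
  ultimately show "r *\<^sub>R x \<in> closure S"
    unfolding closure_sequential by (intro exI[of _ "\<lambda>n. r *\<^sub>R f n"]) simp
qed

lemma Cauchy_add:
  fixes X Y :: "nat \<Rightarrow> 'a::real_normed_vector"
  assumes "Cauchy X" "Cauchy Y"
  shows "Cauchy (\<lambda>n. X n + Y n)"
proof (rule CauchyI)
  fix e :: real assume "0 < e"
  then obtain M N where M: "\<forall>m\<ge>M. \<forall>n\<ge>M. norm (X m - X n) < e/2"
    and N: "\<forall>m\<ge>N. \<forall>n\<ge>N. norm (Y m - Y n) < e/2"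
    using assms unfolding Cauchy_iff by (meson half_gt_zero)
  have "norm ((X m + Y m) - (X n + Y n)) < e" if "max M N \<le> m" "max M N \<le> n" for m n
  proof -
    have "norm (X m - X n) < e/2" "norm (Y m - Y n) < e/2"
      using M N that by auto
    then show ?thesis
      unfolding add_diff_add by (intro norm_triangle_lt) linarith
  qed
  then show "\<exists>M. \<forall>m\<ge>M. \<forall>n\<ge>M. norm ((X m + Y m) - (X n + Y n)) < e"
    by blast
qed

lemma convergent_if_Cauchy_compact_closure_range:
  fixes X :: "nat \<Rightarrow> 'a::metric_space"
  assumes "Cauchy X" "compact (closure (range X))"
  shows "convergent X"
proof -
  have "complete (closure (range X))"
    using assms(2) by (rule compact_imp_complete)
  moreover have "\<forall>n. X n \<in> closure (range X)"
    by (simp add: closure_def)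
  ultimately show ?thesis
    using assms(1) unfolding complete_def convergent_def by (auto dest!: spec[of _ X])
qed

lemma exists_in_infinite_if_eventually:
  fixes N :: "nat set"
  assumes "infinite N" "eventually P sequentially"
  shows "\<exists>n\<in>N. P n"
proof (rule ccontr)
  assume "\<not> (\<exists>n\<in>N. P n)"
  then have "N \<subseteq> {n. \<not> P n}"
    by blast
  moreover have "finite {n. \<not> P n}"
    using assms(2) unfolding cofinite_eq_sequentially[symmetric] eventually_cofinite .
  ultimately have "finite N"
    by (rule finite_subset)
  with assms(1) show False
    by contradiction
qed

lemma geometric_tail_le:
  fixes s :: real
  assumes "0 \<le> s" "s \<le> 1/2"
  shows "(\<Sum>i\<in>{p..<q}. s ^ Suc i) \<le> 2 * s ^ Suc p"
proof (cases "p \<le> q")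
  case True
  then have "(1 - s) * (\<Sum>i\<in>{p..<q}. s ^ Suc i) = s ^ Suc p - s ^ Suc q"
    by (induction q rule: dec_induct) (simp_all add: distrib_left, simp add: algebra_simps)
  also have "\<dots> \<le> s ^ Suc p"
    using assms by simp
  moreover have "(1/2) * (\<Sum>i\<in>{p..<q}. s ^ Suc i) \<le> (1 - s) * (\<Sum>i\<in>{p..<q}. s ^ Suc i)"
    using assms by (intro mult_right_mono sum_nonneg) auto
  ultimately show ?thesis
    by linarith
qed (use assms in simp)

lemma norm_geometric_tail_le:
  fixes s :: real and a :: "nat \<Rightarrow> 'a::real_normed_vector"
  assumes "0 \<le> s" "s \<le> 1/2" "\<And>i. norm (a i) \<le> 1"
  shows "norm (\<Sum>i\<in>{p..<q}. s ^ Suc i *\<^sub>R a i) \<le> 2 * s ^ Suc p"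
proof -
  have "norm (\<Sum>i\<in>{p..<q}. s ^ Suc i *\<^sub>R a i) \<le> (\<Sum>i\<in>{p..<q}. s ^ Suc i)"
    using assms by (intro order_trans[OF norm_sum] sum_mono) (simp add: mult_left_le)
  also have "\<dots> \<le> 2 * s ^ Suc p"
    using assms(1,2) by (rule geometric_tail_le)
  finally show ?thesis .
qed

lemma separable_obtains_total_seq_in_unit_ball:
  assumes "separable_space (euclidean :: 'a::real_normed_vector topology)"
  obtains a :: "nat \<Rightarrow> 'a::real_normed_vector" where "\<And>i. norm (a i) \<le> 1" "linearly_dense (range a)"
proof -
  obtain D :: "'a set" where "countable D" and dense: "closure D = UNIV"
    using assms unfolding separable_space_def by auto
  define a where "a i = sgn (from_nat_into D i)" for i
  have "D \<subseteq> span (range a)"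
  proof
    fix x assume "x \<in> D"
    then obtain i where x: "x = from_nat_into D i"
      using from_nat_into_surj[OF \<open>countable D\<close>] by blast
    have "x = norm x *\<^sub>R a i"
      unfolding a_def x by (cases "from_nat_into D i = 0") (simp_all add: sgn_div_norm)
    then show "x \<in> span (range a)"
      by (metis rangeI span_base span_scale)
  qed
  then have "closure (span (range a)) = UNIV"
    using dense closure_mono by (metis subset_UNIV subset_antisym)
  moreover have "norm (a i) \<le> 1" for i
    by (simp add: a_def norm_sgn)
  ultimately show ?thesis
    using that unfolding linearly_dense_def by blast
qed

lemma Cauchy_obtains_fast_subseq:
  fixes X :: "nat \<Rightarrow> 'a::real_normed_vector" and e :: "nat \<Rightarrow> real"
  assumes "Cauchy X" and "\<And>n. 0 < e n"
  obtains r where "strict_mono r" "\<And>n m. n \<le> m \<Longrightarrow> norm (X (r n) - X (r m)) \<le> e n"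
proof -
  have "\<forall>n. \<exists>M. \<forall>p\<ge>M. \<forall>q\<ge>M. norm (X p - X q) < e n"
    using assms unfolding Cauchy_iff by blast
  then obtain N where N: "\<And>n p q. N n \<le> p \<Longrightarrow> N n \<le> q \<Longrightarrow> norm (X p - X q) < e n"
    by metis
  define r where "r = rec_nat (N 0) (\<lambda>n rn. max (N (Suc n)) (Suc rn))"
  have r_Suc: "r (Suc n) = max (N (Suc n)) (Suc (r n))" for n
    unfolding r_def by simp
  have "strict_mono r"
    by (simp add: strict_mono_Suc_iff r_Suc less_max_iff_disj)
  have N_le_r: "N n \<le> r n" for n
    by (cases n) (simp_all add: r_def)
  have "norm (X (r n) - X (r m)) \<le> e n" if "n \<le> m" for n m
  proof -
    have "r n \<le> r m"
      using \<open>strict_mono r\<close> that by (simp add: strict_mono_less_eq)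
    then have "N n \<le> r m"
      using N_le_r[of n] by linarith
    then show ?thesis
      by (rule less_imp_le[OF N[OF N_le_r]])
  qed
  with \<open>strict_mono r\<close> show ?thesis
    using that by blast
qed

locale cauchy_perturbation =
  fixes c a :: "nat \<Rightarrow> 'a::real_normed_vector" and t :: "nat \<Rightarrow> real"
  assumes t_pos: "\<And>n. 0 < t n"
    and t_le_half: "\<And>n. t n \<le> 1/2"
    and t_tendsto_zero: "t \<longlonglongrightarrow> 0"
    and norm_a_le_one: "\<And>i. norm (a i) \<le> 1"
    and fast_Cauchy: "\<And>n m. n \<le> m \<Longrightarrow> norm (c n - c m) \<le> t n ^ (n + 2)"
begin

definition perturbation :: "nat \<Rightarrow> 'a" where
  "perturbation n = (\<Sum>i<n. t n ^ Suc i *\<^sub>R a i)"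

definition perturbed_seq :: "nat \<Rightarrow> 'a" where
  "perturbed_seq n = c n + perturbation n"

definition coeff_approx :: "nat \<Rightarrow> nat \<Rightarrow> nat \<Rightarrow> 'a" where
  "coeff_approx k n m = (1 / t n ^ Suc k) *\<^sub>R
    (perturbed_seq n - perturbed_seq m - (\<Sum>i<k. (t n ^ Suc i - t m ^ Suc i) *\<^sub>R a i))"

lemma Cauchy_c: "Cauchy c"
proof (rule CauchyI)
  fix e :: real assume "0 < e"
  then obtain M where M: "\<And>n. n \<ge> M \<Longrightarrow> t n < e"
    using order_tendstoD(2)[OF t_tendsto_zero] unfolding eventually_sequentially by blast
  have close: "norm (c m - c n) < e" if "m \<le> n" "M \<le> m" for m n
  proof -
    have "norm (c m - c n) \<le> t m ^ (m + 2)"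
      using fast_Cauchy that(1) by blast
    also have "\<dots> \<le> t m ^ 1"
      using t_pos[of m] t_le_half[of m] by (intro power_decreasing) auto
    finally show ?thesis
      using M[OF that(2)] by simp
  qed
  have "norm (c m - c n) < e" if "M \<le> m" "M \<le> n" for m n
  proof (cases "m \<le> n")
    case True
    then show ?thesis
      using close that by blast
  next
    case False
    then show ?thesis
      using close[of n m] that by (simp add: norm_minus_commute)
  qed
  then show "\<exists>M. \<forall>m\<ge>M. \<forall>n\<ge>M. norm (c m - c n) < e"
    by blast
qed

lemma perturbation_tendsto_zero: "perturbation \<longlonglongrightarrow> 0"
proof (rule Lim_null_comparison)
  show "\<forall>\<^sub>F n in sequentially. norm (perturbation n) \<le> 2 * t n"
  proof (intro always_eventually allI)
    fix n
    have "0 \<le> t n"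
      using t_pos less_imp_le by blast
    then show "norm (perturbation n) \<le> 2 * t n"
      using norm_geometric_tail_le[of "t n" a 0 n] t_le_half norm_a_le_one
      by (simp add: perturbation_def lessThan_atLeast0)
  qed
  show "(\<lambda>n. 2 * t n) \<longlonglongrightarrow> 0"
    using tendsto_mult_right_zero[OF t_tendsto_zero] by simp
qed

lemma Cauchy_perturbed_seq: "Cauchy perturbed_seq"
  unfolding perturbed_seq_def[abs_def]
  using Cauchy_c LIMSEQ_imp_Cauchy[OF perturbation_tendsto_zero] by (rule Cauchy_add)

lemma convergent_c_if_convergent_perturbed_seq:
  assumes "convergent perturbed_seq"
  shows "convergent c"
proof -
  obtain L where "perturbed_seq \<longlonglongrightarrow> L"
    using assms unfolding convergent_def by blast
  then have "(\<lambda>n. perturbed_seq n - perturbation n) \<longlonglongrightarrow> L - 0"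
    using perturbation_tendsto_zero by (rule tendsto_diff)
  then have "c \<longlonglongrightarrow> L"
    by (simp add: perturbed_seq_def)
  then show ?thesis
    by (rule convergentI)
qed

lemma perturbed_seq_diff_decompose:
  assumes "k < n" "k \<le> m"
  shows "perturbed_seq n - perturbed_seq m - (\<Sum>i<k. (t n ^ Suc i - t m ^ Suc i) *\<^sub>R a i)
    = t n ^ Suc k *\<^sub>R a k + ((c n - c m) + (\<Sum>i\<in>{Suc k..<n}. t n ^ Suc i *\<^sub>R a i)
      - (\<Sum>i\<in>{k..<m}. t m ^ Suc i *\<^sub>R a i))"
proof -
  have split: "sum f {..<p} = sum f {..<k} + sum f {k..<p}" if "k \<le> p" for f :: "nat \<Rightarrow> 'a" and p
    using that by (subst ivl_disj_un_one(2)[symmetric, of k p]) (auto intro: sum.union_disjoint)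
  have "perturbation n = (\<Sum>i<k. t n ^ Suc i *\<^sub>R a i) + t n ^ Suc k *\<^sub>R a k
      + (\<Sum>i\<in>{Suc k..<n}. t n ^ Suc i *\<^sub>R a i)"
    using assms(1) split[of n] unfolding perturbation_def by (simp add: sum.atLeast_Suc_lessThan)
  moreover have "perturbation m = (\<Sum>i<k. t m ^ Suc i *\<^sub>R a i) + (\<Sum>i\<in>{k..<m}. t m ^ Suc i *\<^sub>R a i)"
    using assms(2) split[of m] unfolding perturbation_def by simp
  ultimately show ?thesis
    unfolding perturbed_seq_def by (simp add: sum_subtractf algebra_simps)
qed

lemma norm_coeff_approx_diff_le:
  assumes "k < n" "n \<le> m"
  shows "norm (coeff_approx k n m - a k) \<le> 3 * t n + 2 * t m ^ Suc k / t n ^ Suc k"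
proof -
  define T where "T = t n ^ Suc k"
  define S1 where "S1 = (\<Sum>i\<in>{Suc k..<n}. t n ^ Suc i *\<^sub>R a i)"
  define S2 where "S2 = (\<Sum>i\<in>{k..<m}. t m ^ Suc i *\<^sub>R a i)"
  have T_pos: "0 < T"
    unfolding T_def using t_pos by simp
  have t_bounds: "0 \<le> t n" "t n \<le> 1/2" "0 \<le> t m" "t m \<le> 1/2"
    using t_pos t_le_half less_imp_le by blast+
  have "norm (c n - c m) \<le> t n * T"
    using fast_Cauchy[of n m] assms power_decreasing[of "Suc (Suc k)" "n + 2" "t n"] t_bounds
    by (simp add: T_def)
  moreover have "norm S1 \<le> 2 * (t n * T)"
    unfolding S1_def T_def using norm_geometric_tail_le[of "t n" a "Suc k" n] norm_a_le_one t_bounds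
    by simp
  moreover have "norm S2 \<le> 2 * t m ^ Suc k"
    unfolding S2_def using norm_geometric_tail_le[of "t m" a k m] norm_a_le_one t_bounds
    by simp
  moreover have "norm ((c n - c m) + S1 - S2) \<le> norm (c n - c m) + norm S1 + norm S2"
    using norm_triangle_ineq4[of "(c n - c m) + S1" S2] norm_triangle_ineq[of "c n - c m" S1] by linarith
  ultimately have R_bound: "norm ((c n - c m) + S1 - S2) \<le> 3 * t n * T + 2 * t m ^ Suc k"
    by linarith
  have "k \<le> m"
    using assms by simp
  have "coeff_approx k n m - a k = (1 / T) *\<^sub>R (T *\<^sub>R a k + ((c n - c m) + S1 - S2)) - a k"
    unfolding coeff_approx_def S1_def S2_def T_def perturbed_seq_diff_decompose[OF assms(1) \<open>k \<le> m\<close>] ..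
  also have "\<dots> = (1 / T) *\<^sub>R ((c n - c m) + S1 - S2)"
    using T_pos by (simp add: scaleR_add_right)
  finally have "norm (coeff_approx k n m - a k) = norm ((c n - c m) + S1 - S2) / T"
    using T_pos by simp
  also have "\<dots> \<le> (3 * t n * T + 2 * t m ^ Suc k) / T"
    using R_bound T_pos by (simp add: divide_right_mono)
  also have "\<dots> = 3 * t n + 2 * t m ^ Suc k / T"
    using T_pos by (simp add: add_divide_distrib)
  finally show ?thesis
    unfolding T_def .
qed

lemma a_in_closure_span_perturbed_seq:
  assumes "infinite N"
  shows "a k \<in> closure (span (perturbed_seq ` N))"
proof (induction k rule: less_induct)
  case (less k)
  let ?V = "closure (span (perturbed_seq ` N))"
  have V: "subspace ?V"
    by (simp add: subspace_closure)
  have seq_in_V: "perturbed_seq n \<in> ?V" if "n \<in> N" for n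
    using that by (intro subsetD[OF closure_subset] span_base imageI)
  show ?case
    unfolding closed_approachable[OF closed_closure, symmetric]
  proof (intro allI impI)
    fix e :: real assume "0 < e"
    have "\<forall>\<^sub>F n in sequentially. t n < e/6"
      using t_tendsto_zero \<open>0 < e\<close> by (intro order_tendstoD(2)) auto
    with eventually_gt_at_top have "\<forall>\<^sub>F n in sequentially. k < n \<and> 3 * t n < e/2"
      by eventually_elim auto
    then obtain n where n: "n \<in> N" "k < n" "3 * t n < e/2"
      using exists_in_infinite_if_eventually[OF assms] by blast
    have "(\<lambda>m. 2 * t m ^ Suc k / t n ^ Suc k) \<longlonglongrightarrow> 2 * 0 ^ Suc k / t n ^ Suc k"
      using t_pos[of n] by (intro tendsto_intros t_tendsto_zero) simp
    then have "\<forall>\<^sub>F m in sequentially. 2 * t m ^ Suc k / t n ^ Suc k < e/2"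
      using \<open>0 < e\<close> by (intro order_tendstoD(2)) auto
    with eventually_ge_at_top have "\<forall>\<^sub>F m in sequentially. n \<le> m \<and> 2 * t m ^ Suc k / t n ^ Suc k < e/2"
      by eventually_elim auto
    then obtain m where m: "m \<in> N" "n \<le> m" "2 * t m ^ Suc k / t n ^ Suc k < e/2"
      using exists_in_infinite_if_eventually[OF assms] by blast
    have "coeff_approx k n m \<in> ?V"
      unfolding coeff_approx_def using V less seq_in_V n(1) m(1)
      by (intro subspace_scale subspace_diff subspace_sum) auto
    moreover have "dist (coeff_approx k n m) (a k) < e"
      using norm_coeff_approx_diff_le[OF n(2) m(2)] n(3) m(3) unfolding dist_norm by linarith
    ultimately show "\<exists>y\<in>?V. dist y (a k) < e" by blast
  qed
qed

lemma bounded_range_perturbed_seq: "bounded (range perturbed_seq)"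
  using Cauchy_perturbed_seq by (rule cauchy_imp_bounded)

lemma overcomplete_perturbed_seq:
  assumes "linearly_dense (range a)"
  shows "overcomplete perturbed_seq"
  unfolding overcomplete_def linearly_dense_def
proof (intro allI impI)
  fix r :: "nat \<Rightarrow> nat" assume "strict_mono r"
  let ?V = "closure (span (range (perturbed_seq \<circ> r)))"
  have "infinite (range r)"
    using \<open>strict_mono r\<close> by (intro range_inj_infinite strict_mono_imp_inj_on)
  then have "range a \<subseteq> closure (span (perturbed_seq ` range r))"
    using a_in_closure_span_perturbed_seq by auto
  then have "range a \<subseteq> ?V"
    by (simp add: image_comp)
  then have "span (range a) \<subseteq> ?V"
    by (intro span_minimal subspace_closure subspace_span)
  then have "closure (span (range a)) \<subseteq> ?V"
    by (intro closure_minimal) auto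
  then show "?V = UNIV"
    using assms unfolding linearly_dense_def by auto
qed

lemma not_compact_closure_range_perturbed_seq:
  assumes "\<not> convergent c"
  shows "\<not> compact (closure (range perturbed_seq))"
proof
  assume "compact (closure (range perturbed_seq))"
  with Cauchy_perturbed_seq have "convergent perturbed_seq"
    by (rule convergent_if_Cauchy_compact_closure_range)
  then have "convergent c"
    by (rule convergent_c_if_convergent_perturbed_seq)
  with assms show False
    by contradiction
qed

end

theorem theorem5p2:
  assumes "separable_space (euclidean :: 'a::real_normed_vector topology)"
    and "\<not> complete (UNIV :: 'a set)"
  shows "\<exists>g :: nat \<Rightarrow> 'a. bounded (range g) \<and> overcomplete g \<and> \<not> compact (closure (range g))"
proof -
  obtain a :: "nat \<Rightarrow> 'a" where a_le_one: "\<And>i. norm (a i) \<le> 1" and a_dense: "linearly_dense (range a)"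
    using separable_obtains_total_seq_in_unit_ball[OF assms(1)] by blast
  obtain X :: "nat \<Rightarrow> 'a" where "Cauchy X" "\<not> convergent X"
    using assms(2) unfolding complete_def convergent_def by auto
  define t :: "nat \<Rightarrow> real" where "t n = (1/2) ^ Suc n" for n
  have "0 < t n ^ (n + 2)" for n
    by (simp add: t_def)
  then obtain r where "strict_mono r"
    and fast: "\<And>n m. n \<le> m \<Longrightarrow> norm (X (r n) - X (r m)) \<le> t n ^ (n + 2)"
    using Cauchy_obtains_fast_subseq[OF \<open>Cauchy X\<close>, of "\<lambda>n. t n ^ (n + 2)"] by blast
  interpret cauchy_perturbation "X \<circ> r" a t
  proof
    show "0 < t n" "t n \<le> 1/2" for n
      by (simp_all add: t_def power_le_one)
    show "t \<longlonglongrightarrow> 0"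
      unfolding t_def by (intro LIMSEQ_Suc LIMSEQ_realpow_zero) auto
    show "norm ((X \<circ> r) n - (X \<circ> r) m) \<le> t n ^ (n + 2)" if "n \<le> m" for n m
      using fast[OF that] by simp
  qed (rule a_le_one)
  have "\<not> convergent (X \<circ> r)"
    using \<open>\<not> convergent X\<close> Cauchy_converges_subseq[OF \<open>Cauchy X\<close> \<open>strict_mono r\<close>]
    unfolding convergent_def by blast
  then show ?thesis
    by (intro exI[of _ perturbed_seq] conjI bounded_range_perturbed_seq
        overcomplete_perturbed_seq[OF a_dense] not_compact_closure_range_perturbed_seq)
qed

end
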